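(* For every $Q\in\mathcal{P}$ and every $0<v<2$, $$D^*(v,Q)=\inf\left\{\mathrm{KL}_2\!\left(Q(A)+\tfrac v2,\,Q(A)\right):\ A\in\mathcal{F},\ 0<Q(A)\le 1-\tfrac v2\right\}.$$
   Context: Let $(\Omega,\mathcal{F},\mu)$ be a finite or $\sigma$-finite measure space, and let $\mathcal{P}$ be the set of probability measures on $(\Omega,\mathcal{F})$ absolutely continuous with respect to $\mu$. For $P,Q\in\mathcal{P}$ the lower-case letters $p,q$ denote their densities with respect to $\mu$. The Kullback–Leibler divergence is $D(P\Vert Q)=\int\ln\frac{dP}{dQ}\,dP$ if $P\ll Q$, and $+\infty$ otherwise. The total variation distance is $V(P,Q)=\int_\Omega|p-q|\,d\mu$. For $v>0$ define $D^*(v,Q)=\inf\{D(P\Vert Q):P\in\mathcal{P},\ V(P,Q)\ge v\}$. All infima over empty sets equal $+\infty$. For $p,q\in[0,1]$, $\mathrm{KL}_2(p,q)=p\ln\frac pq+(1-p)\ln\frac{1-p}{1-q}$, with the conventions $0\ln(0/x)=0$ and $a\ln(a/0)=+\infty$ for $a>0$. *)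

theory Defs
  imports "HOL-Probability.Probability"
begin

definition Pset :: "'a measure \<Rightarrow> 'a measure set" where
  "Pset M = {P. prob_space P \<and> sets P = sets M \<and> absolutely_continuous M P}"

text \<open>The Radon--Nikodym derivative \<open>dP/dQ\<close> is \<open>RN_deriv Q P\<close>. Since the negative part of
  \<open>ln (dP/dQ)\<close> is always \<open>P\<close>-integrable, non-integrability means the integral is \<open>+\<infinity>\<close>.\<close>
definition KLdiv :: "'a measure \<Rightarrow> 'a measure \<Rightarrow> ereal" where
  "KLdiv P Q =
    (if absolutely_continuous Q P then
       (if integrable P (\<lambda>x. ln (enn2real (RN_deriv Q P x)))
        then ereal (\<integral>x. ln (enn2real (RN_deriv Q P x)) \<partial>P)
        else \<infinity>)
     else \<infinity>)"

definition TV :: "'a measure \<Rightarrow> 'a measure \<Rightarrow> 'a measure \<Rightarrow> ennreal" where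
  "TV M P Q = (\<integral>\<^sup>+ x. ennreal \<bar>enn2real (RN_deriv M P x) - enn2real (RN_deriv M Q x)\<bar> \<partial>M)"

text \<open>\<open>D\<^sup>*(v,Q) = inf {D(P\<parallel>Q) : P \<in> \<P>, V(P,Q) \<ge> v}\<close> (Inf of the empty set is \<open>+\<infinity>\<close> in ereal).\<close>
definition Dstar :: "'a measure \<Rightarrow> real \<Rightarrow> 'a measure \<Rightarrow> ereal" where
  "Dstar M v Q = Inf {KLdiv P Q | P. P \<in> Pset M \<and> TV M P Q \<ge> ennreal v}"

definition xlogxy :: "real \<Rightarrow> real \<Rightarrow> ereal" where
  "xlogxy a b = (if a = 0 then 0 else if b = 0 then \<infinity> else ereal (a * ln (a / b)))"

definition KL2 :: "real \<Rightarrow> real \<Rightarrow> ereal" where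
  "KL2 p q = xlogxy p q + xlogxy (1 - p) (1 - q)"

end

theory Submission
  imports Defs
begin

text \<open>
  Everything is expressed through the density \<open>f = dP/dQ\<close>: the locale \<open>prob_density\<close>
  fixes a probability density \<open>f\<close> w.r.t. \<open>Q\<close>, and for \<open>P = f\<cdot>Q\<close> we show
  \<open>D(P\<parallel>Q) = \<integral> f ln f dQ\<close> and \<open>V(P,Q) = \<integral> |f - 1| dQ\<close>.

  Lower bound: by Scheffe's identity \<open>V(P,Q) = 2 (P(A) - Q(A))\<close> for \<open>A = {f > 1}\<close>, so
  \<open>P(A) \<ge> Q(A) + v/2\<close>; the log-sum inequality on the partition \<open>{A, -A}\<close> gives
  \<open>D(P\<parallel>Q) \<ge> KL\<^sub>2(P(A), Q(A))\<close>, and \<open>KL\<^sub>2(\<cdot>, q)\<close> is nondecreasing on \<open>[q, 1]\<close>.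
  Upper bound: for admissible \<open>A\<close>, the two-valued density equal to \<open>(a + v/2)/a\<close> on \<open>A\<close> and
  to \<open>(1 - a - v/2)/(1 - a)\<close> off \<open>A\<close> (\<open>a = Q(A)\<close>) has total variation exactly \<open>v\<close> and
  divergence exactly \<open>KL\<^sub>2(a + v/2, a)\<close>.
\<close>

text \<open>Binary divergence as a real function; for \<open>0 < q < 1\<close> it agrees with \<open>KL2\<close>, the
  conventions \<open>0 ln 0 = 0\<close> being built into Isabelle's \<open>ln 0 = 0\<close>.\<close>
definition kl_bin :: "real \<Rightarrow> real \<Rightarrow> real" where
  "kl_bin p q = p * ln (p / q) + (1 - p) * ln ((1 - p) / (1 - q))"

lemma KL2_eq_kl_bin:
  assumes "0 < q" "q < 1"
  shows "KL2 p q = ereal (kl_bin p q)"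
  using assms by (simp add: KL2_def xlogxy_def kl_bin_def)

text \<open>\<open>KL\<^sub>2(\<cdot>, q)\<close> is nondecreasing to the right of \<open>q\<close>: its derivative is
  \<open>ln (t/q) - ln ((1-t)/(1-q)) \<ge> 0\<close> for \<open>q \<le> t < 1\<close>.\<close>
lemma kl_bin_mono_below_one:
  assumes "0 < q" "q \<le> y" "y \<le> x" "x < 1"
  shows "kl_bin y q \<le> kl_bin x q"
proof -
  define g where "g t = t * (ln t - ln q) + (1 - t) * (ln (1 - t) - ln (1 - q))" for t
  have g_eq: "kl_bin t q = g t" if "0 < t" "t < 1" for t
    using that assms by (simp add: kl_bin_def g_def ln_div)
  have "g y \<le> g x"
  proof (rule DERIV_nonneg_imp_nondecreasing[OF \<open>y \<le> x\<close>])
    fix t assume t: "y \<le> t" "t \<le> x"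
    with assms have t01: "0 < t" "t < 1" by auto
    have "DERIV g t :> (ln t - ln q) + t * (1 / t) - (ln (1 - t) - ln (1 - q)) + (1 - t) * (- 1 / (1 - t))"
      unfolding g_def using t01 by (auto intro!: derivative_eq_intros)
    then have "DERIV g t :> (ln t - ln q) + (ln (1 - q) - ln (1 - t))"
      by (rule DERIV_cong) (use t01 in \<open>simp add: field_simps\<close>)
    moreover have "0 \<le> (ln t - ln q) + (ln (1 - q) - ln (1 - t))"
      using t t01 assms by simp
    ultimately show "\<exists>d. DERIV g t :> d \<and> 0 \<le> d" by auto
  qed
  with assms show ?thesis by (simp add: g_eq)
qed

text \<open>The right endpoint \<open>t = 1\<close>, where \<open>KL\<^sub>2(1, q) = ln (1/q)\<close>, is treated directly.\<close>
lemma kl_bin_le_one: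
  assumes "0 < q" "q \<le> y" "y \<le> 1"
  shows "kl_bin y q \<le> kl_bin 1 q"
proof -
  have "ln (y / q) \<le> ln (1 / q)"
    using assms by (simp add: divide_right_mono)
  then have "y * ln (y / q) \<le> y * ln (1 / q)"
    using assms by (intro mult_left_mono) auto
  also have "\<dots> \<le> ln (1 / q)"
    using assms by (intro mult_left_le_one_le) auto
  finally have first: "y * ln (y / q) \<le> ln (1 / q)" .
  have "(1 - y) * ln ((1 - y) / (1 - q)) \<le> 0"
    using assms by (cases "y = 1") (auto intro!: mult_nonneg_nonpos)
  with first show ?thesis by (simp add: kl_bin_def)
qed

lemma kl_bin_mono:
  assumes "0 < q" "q \<le> y" "y \<le> x" "x \<le> 1"
  shows "kl_bin y q \<le> kl_bin x q"
  using kl_bin_mono_below_one[of q y x] kl_bin_le_one[of q y] assms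
  by (cases "x = 1") auto

text \<open>Tangent-line bound for the convex function \<open>t ln t\<close>, equivalent to \<open>ln x \<le> x - 1\<close>.\<close>
lemma mult_ln_ge_tangent:
  fixes t c :: real
  assumes "0 \<le> t" "0 < c"
  shows "t * ln c + t - c \<le> t * ln t"
proof (cases "t = 0")
  case False
  with assms have "ln c - ln t \<le> c / t - 1"
    using ln_le_minus_one[of "c / t"] by (simp add: ln_div)
  then have "t * (ln c - ln t) \<le> t * (c / t - 1)"
    using assms by (intro mult_left_mono) auto
  with False show ?thesis by (simp add: algebra_simps)
qed (use assms in simp)

locale prob_density = prob_space Q for Q :: "'a measure" +
  fixes f :: "'a \<Rightarrow> real"
  assumes f_borel [measurable]: "f \<in> borel_measurable Q"
    and f_nonneg: "\<And>x. 0 \<le> f x"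
    and f_integrable: "integrable Q f"
    and f_integral: "(\<integral>x. f x \<partial>Q) = 1"
begin

abbreviation P :: "'a measure" where
  "P \<equiv> density Q (\<lambda>x. ennreal (f x))"

lemma prob_space_P: "prob_space P"
proof (rule prob_spaceI)
  have "emeasure P (space P) = (\<integral>\<^sup>+x. ennreal (f x) \<partial>Q)"
    by (auto simp: emeasure_density intro!: nn_integral_cong)
  also have "\<dots> = 1"
    using nn_integral_eq_integral[OF f_integrable] f_nonneg f_integral by simp
  finally show "emeasure P (space P) = 1" .
qed

lemma measure_P:
  assumes "B \<in> sets Q"
  shows "measure P B = (\<integral>x. f x * indicator B x \<partial>Q)"
proof -
  have "measure P B = (\<integral>x. indicator B x \<partial>P)"
    using assms sets.sets_into_space[OF assms] by (simp add: Int_absorb2)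
  also have "\<dots> = (\<integral>x. f x *\<^sub>R indicator B x \<partial>Q)"
    by (rule integral_density) (use assms f_nonneg in auto)
  finally show ?thesis by simp
qed

lemma scheffe:
  defines "A \<equiv> {x \<in> space Q. 1 < f x}"
  shows "A \<in> sets Q" and "(\<integral>x. \<bar>f x - 1\<bar> \<partial>Q) = 2 * (measure P A - measure Q A)"
proof -
  show A: "A \<in> sets Q" unfolding A_def by measurable
  have "(\<integral>x. \<bar>f x - 1\<bar> \<partial>Q) = (\<integral>x. 2 * (f x * indicator A x) - 2 * indicator A x + 1 - f x \<partial>Q)"
    by (rule Bochner_Integration.integral_cong) (auto simp: A_def indicator_def)
  also have "\<dots> = 2 * (measure P A - measure Q A)"
  proof -
    have "integrable Q (\<lambda>x. f x * indicator A x)"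
      using A f_integrable by (rule integrable_real_mult_indicator)
    moreover have "integrable Q (indicator A :: 'a \<Rightarrow> real)"
      using A by (simp add: emeasure_eq_measure)
    moreover have "A \<inter> space Q = A" unfolding A_def by auto
    ultimately show ?thesis
      using A f_integrable f_integral by (simp add: measure_P[OF A] prob_space)
  qed
  finally show "(\<integral>x. \<bar>f x - 1\<bar> \<partial>Q) = 2 * (measure P A - measure Q A)" .
qed

lemma entropy_on_set_ge_tangent:
  assumes ent: "integrable Q (\<lambda>x. f x * ln (f x))" and B: "B \<in> sets Q" and c: "0 < c"
  shows "measure P B * ln c + measure P B - c * measure Q B
           \<le> (\<integral>x. f x * ln (f x) * indicator B x \<partial>Q)"
proof -
  have fB: "integrable Q (\<lambda>x. f x * indicator B x)"
    using B f_integrable by (rule integrable_real_mult_indicator)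
  have iB: "integrable Q (indicator B :: 'a \<Rightarrow> real)"
    using B by (simp add: emeasure_eq_measure)
  have "measure P B * ln c + measure P B - c * measure Q B
          = (\<integral>x. ln c * (f x * indicator B x) + f x * indicator B x - c * indicator B x \<partial>Q)"
    using fB iB B by (simp add: measure_P algebra_simps)
  also have "\<dots> \<le> (\<integral>x. f x * ln (f x) * indicator B x \<partial>Q)"
  proof (rule integral_mono)
    show "integrable Q (\<lambda>x. ln c * (f x * indicator B x) + f x * indicator B x - c * indicator B x)"
      using fB iB by auto
    show "integrable Q (\<lambda>x. f x * ln (f x) * indicator B x)"
      using B ent by (rule integrable_real_mult_indicator)
    show "ln c * (f x * indicator B x) + f x * indicator B x - c * indicator B x
            \<le> f x * ln (f x) * indicator B x" for x
      using mult_ln_ge_tangent[OF f_nonneg c, of x] by (auto simp: indicator_def algebra_simps)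
  qed
  finally show ?thesis .
qed

text \<open>Log-sum inequality for a single set: with the optimal slope \<open>c = P(B)/Q(B)\<close>,
  and letting \<open>c \<rightarrow> 0\<close> when \<open>P(B) = 0\<close>.\<close>
lemma entropy_on_set_ge:
  assumes ent: "integrable Q (\<lambda>x. f x * ln (f x))" and B: "B \<in> sets Q"
    and QB: "0 < measure Q B"
  shows "measure P B * ln (measure P B / measure Q B) \<le> (\<integral>x. f x * ln (f x) * indicator B x \<partial>Q)"
proof (cases "measure P B = 0")
  case True
  have "0 \<le> (\<integral>x. f x * ln (f x) * indicator B x \<partial>Q)"
  proof (rule field_le_epsilon)
    fix e :: real assume "0 < e"
    with QB have "0 < e / measure Q B" by simp
    from entropy_on_set_ge_tangent[OF ent B this] True QB
    show "0 \<le> (\<integral>x. f x * ln (f x) * indicator B x \<partial>Q) + e" by simp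
  qed
  with True show ?thesis by simp
next
  case False
  then have "0 < measure P B / measure Q B" using QB by (simp add: zero_less_measure_iff)
  from entropy_on_set_ge_tangent[OF ent B this] QB show ?thesis by simp
qed

lemma kl_bin_le_entropy:
  assumes ent: "integrable Q (\<lambda>x. f x * ln (f x))" and A: "A \<in> sets Q"
    and QA: "0 < measure Q A" "measure Q A < 1"
  shows "kl_bin (measure P A) (measure Q A) \<le> (\<integral>x. f x * ln (f x) \<partial>Q)"
proof -
  interpret P: prob_space P by (rule prob_space_P)
  define C where "C = space Q - A"
  have C: "C \<in> sets Q" unfolding C_def using A by auto
  have QC: "measure Q C = 1 - measure Q A"
    unfolding C_def using prob_compl[OF A] by simp
  have PC: "measure P C = 1 - measure P A"
    unfolding C_def using P.prob_compl[of A] A by simp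
  have "(\<integral>x. f x * ln (f x) \<partial>Q)
          = (\<integral>x. f x * ln (f x) * indicator A x + f x * ln (f x) * indicator C x \<partial>Q)"
    by (rule Bochner_Integration.integral_cong) (auto simp: C_def indicator_def)
  also have "\<dots> = (\<integral>x. f x * ln (f x) * indicator A x \<partial>Q) + (\<integral>x. f x * ln (f x) * indicator C x \<partial>Q)"
    using A C ent by (intro Bochner_Integration.integral_add integrable_real_mult_indicator)
  finally have split: "(\<integral>x. f x * ln (f x) \<partial>Q)
      = (\<integral>x. f x * ln (f x) * indicator A x \<partial>Q) + (\<integral>x. f x * ln (f x) * indicator C x \<partial>Q)" .
  have "kl_bin (measure P A) (measure Q A)
      = measure P A * ln (measure P A / measure Q A) + measure P C * ln (measure P C / measure Q C)"
    by (simp add: kl_bin_def QC PC)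
  with split entropy_on_set_ge[OF ent A QA(1)] entropy_on_set_ge[OF ent C] QA(2) QC
  show ?thesis by simp
qed

lemma absolutely_continuous_P: "absolutely_continuous Q P"
  by (rule absolutely_continuousI_density) simp

lemma P_in_Pset:
  assumes "Q \<in> Pset M"
  shows "P \<in> Pset M"
  using assms prob_space_P absolutely_continuous_P
  by (auto simp: Pset_def absolutely_continuous_def)

lemma RN_deriv_P: "AE x in Q. enn2real (RN_deriv Q P x) = f x"
proof -
  have "AE x in Q. ennreal (f x) = RN_deriv Q P x"
    by (rule RN_deriv_unique) simp_all
  then show ?thesis by eventually_elim (use f_nonneg in \<open>metis enn2real_ennreal\<close>)
qed

lemma KLdiv_P:
  "KLdiv P Q = (if integrable Q (\<lambda>x. f x * ln (f x)) then ereal (\<integral>x. f x * ln (f x) \<partial>Q) else \<infinity>)"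
proof -
  have "AE x in P. ln (enn2real (RN_deriv Q P x)) = ln (f x)"
    using RN_deriv_P by (auto simp: AE_density elim!: eventually_mono)
  then have "integrable P (\<lambda>x. ln (enn2real (RN_deriv Q P x))) = integrable P (\<lambda>x. ln (f x))"
    and "(\<integral>x. ln (enn2real (RN_deriv Q P x)) \<partial>P) = (\<integral>x. ln (f x) \<partial>P)"
    by (simp_all add: integrable_cong_AE integral_cong_AE)
  moreover have "integrable P (\<lambda>x. ln (f x)) = integrable Q (\<lambda>x. f x * ln (f x))"
    by (subst integrable_density) (use f_nonneg in auto)
  moreover have "(\<integral>x. ln (f x) \<partial>P) = (\<integral>x. f x * ln (f x) \<partial>Q)"
    by (subst integral_density) (use f_nonneg in auto)
  ultimately show ?thesis
    using absolutely_continuous_P by (simp add: KLdiv_def)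
qed

text \<open>Total variation is the \<open>L\<^sup>1(Q)\<close> distance between the density \<open>f\<close> and \<open>1\<close>: the
  \<open>\<mu>\<close>-densities of \<open>P\<close> and \<open>Q\<close> are \<open>q f\<close> and \<open>q\<close>, so \<open>|p - q| = q |f - 1|\<close>.\<close>
lemma TV_P:
  assumes M: "sigma_finite_measure M" and QM: "Q \<in> Pset M"
  shows "TV M P Q = ennreal (\<integral>x. \<bar>f x - 1\<bar> \<partial>Q)"
proof -
  interpret M: sigma_finite_measure M by fact
  have sQ: "sets Q = sets M" and acQ: "absolutely_continuous M Q"
    using QM by (auto simp: Pset_def)
  have Qd: "density M (RN_deriv M Q) = Q"
    using M.density_RN_deriv[OF acQ sQ] .
  have fM [measurable]: "f \<in> borel_measurable M"
    using f_borel measurable_cong_sets[OF sQ refl] by blast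
  have "P = density (density M (RN_deriv M Q)) (\<lambda>x. ennreal (f x))"
    by (simp add: Qd)
  then have Pd: "density M (\<lambda>x. RN_deriv M Q x * ennreal (f x)) = P"
    by (simp add: density_density_eq)
  have dP: "AE x in M. RN_deriv M Q x * ennreal (f x) = RN_deriv M P x"
    by (rule M.RN_deriv_unique[OF _ Pd]) simp
  have dQ_finite: "AE x in M. RN_deriv M Q x \<noteq> \<infinity>"
    using M.RN_deriv_finite[OF _ acQ sQ] sigma_finite_measure_axioms by blast
  have "TV M P Q = (\<integral>\<^sup>+x. RN_deriv M Q x * ennreal \<bar>f x - 1\<bar> \<partial>M)"
    unfolding TV_def
  proof (rule nn_integral_cong_AE)
    show "AE x in M. ennreal \<bar>enn2real (RN_deriv M P x) - enn2real (RN_deriv M Q x)\<bar> =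
                 RN_deriv M Q x * ennreal \<bar>f x - 1\<bar>"
      using dP dQ_finite
    proof eventually_elim
      case (elim x)
      define r where "r = enn2real (RN_deriv M Q x)"
      have r: "RN_deriv M Q x = ennreal r" and "0 \<le> r"
        using elim(2) by (simp_all add: r_def less_top)
      have dPx: "enn2real (RN_deriv M P x) = r * f x"
        using elim(1)[symmetric] f_nonneg[of x] by (simp add: r_def enn2real_mult)
      have "\<bar>enn2real (RN_deriv M P x) - r\<bar> = r * \<bar>f x - 1\<bar>"
      proof -
        have "r * f x - r = r * (f x - 1)" by (simp add: algebra_simps)
        with dPx \<open>0 \<le> r\<close> show ?thesis by (simp add: abs_mult)
      qed
      then show ?case unfolding r using \<open>0 \<le> r\<close> by (simp add: ennreal_mult)
    qed
  qed
  also have "\<dots> = (\<integral>\<^sup>+x. ennreal \<bar>f x - 1\<bar> \<partial>Q)"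
    by (subst Qd[symmetric]) (simp add: nn_integral_density)
  also have "\<dots> = ennreal (\<integral>x. \<bar>f x - 1\<bar> \<partial>Q)"
    by (rule nn_integral_eq_integral) (use f_integrable in auto)
  finally show ?thesis .
qed

end

lemma prob_densityI:
  fixes f :: "'a \<Rightarrow> real"
  assumes Q: "prob_space Q" and f: "f \<in> borel_measurable Q" "\<And>x. 0 \<le> f x"
    and P: "prob_space (density Q (\<lambda>x. ennreal (f x)))"
  shows "prob_density Q f"
proof -
  interpret P: prob_space "density Q (\<lambda>x. ennreal (f x))" by fact
  have "integrable (density Q (\<lambda>x. ennreal (f x))) (\<lambda>_. 1::real)"
    by simp
  then have "integrable Q (\<lambda>x. f x *\<^sub>R (1::real))"
    by (subst (asm) integrable_density) (use f in auto)
  moreover have "(\<integral>x. f x *\<^sub>R (1::real) \<partial>Q) = integral\<^sup>L (density Q (\<lambda>x. ennreal (f x))) (\<lambda>_. 1)"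
    by (rule integral_density[symmetric]) (use f in auto)
  moreover have "integral\<^sup>L (density Q (\<lambda>x. ennreal (f x))) (\<lambda>_. 1::real) = 1"
    using P.prob_space by simp
  ultimately show ?thesis
    by (intro prob_density.intro prob_density_axioms.intro Q f) simp_all
qed

lemma prob_density_RN_deriv:
  assumes Q: "prob_space Q" and P: "prob_space P" and sets: "sets P = sets Q"
    and ac: "absolutely_continuous Q P"
  shows "prob_density Q (\<lambda>x. enn2real (RN_deriv Q P x))"
    and "P = density Q (\<lambda>x. ennreal (enn2real (RN_deriv Q P x)))"
proof -
  interpret Q: prob_space Q by fact
  interpret P: prob_space P by fact
  have "AE x in Q. RN_deriv Q P x \<noteq> \<infinity>"
    using Q.RN_deriv_finite[OF _ ac sets] P.sigma_finite_measure_axioms by blast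
  then have "density Q (\<lambda>x. ennreal (enn2real (RN_deriv Q P x))) = density Q (RN_deriv Q P)"
    by (intro density_cong) (auto simp: less_top elim!: eventually_mono)
  also have "\<dots> = P"
    by (rule Q.density_RN_deriv[OF ac sets])
  finally show Pd: "P = density Q (\<lambda>x. ennreal (enn2real (RN_deriv Q P x)))" ..
  show "prob_density Q (\<lambda>x. enn2real (RN_deriv Q P x))"
    by (rule prob_densityI[OF Q]) (use P Pd in auto)
qed

lemma two_valued_integral:
  assumes Q: "prob_space Q" and A: "A \<in> sets Q"
  shows "integrable Q (\<lambda>x. if x \<in> A then \<alpha> else \<beta> :: real)"
    and "(\<integral>x. (if x \<in> A then \<alpha> else \<beta>) \<partial>Q) = \<alpha> * measure Q A + \<beta> * (1 - measure Q A)"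
proof -
  interpret Q: prob_space Q by fact
  have eq: "(\<lambda>x. if x \<in> A then \<alpha> else \<beta>) = (\<lambda>x. \<beta> + (\<alpha> - \<beta>) * indicator A x)"
    by (auto simp: indicator_def)
  have i: "integrable Q (indicator A :: _ \<Rightarrow> real)"
    using A by (simp add: Q.emeasure_eq_measure)
  then show "integrable Q (\<lambda>x. if x \<in> A then \<alpha> else \<beta> :: real)"
    unfolding eq by auto
  have "A \<inter> space Q = A" using sets.sets_into_space[OF A] by auto
  with i show "(\<integral>x. (if x \<in> A then \<alpha> else \<beta>) \<partial>Q) = \<alpha> * measure Q A + \<beta> * (1 - measure Q A)"
    unfolding eq by (simp add: Q.prob_space algebra_simps)
qed

text \<open>Lower bound: every admissible \<open>P\<close> of finite divergence is dominated by one of the binary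
  divergences, witnessed by \<open>A = {dP/dQ > 1}\<close>.\<close>
lemma KLdiv_ge_binary:
  assumes M: "sigma_finite_measure M" and QM: "Q \<in> Pset M" and PM: "P \<in> Pset M"
    and v: "0 < v" and tv: "ennreal v \<le> TV M P Q" and fin: "KLdiv P Q \<noteq> \<infinity>"
  shows "\<exists>A. A \<in> sets M \<and> 0 < measure Q A \<and> measure Q A \<le> 1 - v / 2 \<and>
             KL2 (measure Q A + v / 2) (measure Q A) \<le> KLdiv P Q"
proof -
  have Q: "prob_space Q" and sQ: "sets Q = sets M"
    using QM by (auto simp: Pset_def)
  have P: "prob_space P" and sP: "sets P = sets Q"
    using PM sQ by (auto simp: Pset_def)
  have ac: "absolutely_continuous Q P"
    using fin by (auto simp: KLdiv_def split: if_splits)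
  define f where "f x = enn2real (RN_deriv Q P x)" for x
  interpret prob_density Q f
    unfolding f_def by (rule prob_density_RN_deriv(1)[OF Q P sP ac])
  have Pd: "density Q (\<lambda>x. ennreal (f x)) = P"
    unfolding f_def by (rule prob_density_RN_deriv(2)[OF Q P sP ac, symmetric])
  have ent: "integrable Q (\<lambda>x. f x * ln (f x))"
    and KL: "KLdiv P Q = ereal (\<integral>x. f x * ln (f x) \<partial>Q)"
    using KLdiv_P fin unfolding Pd by (simp_all split: if_splits)
  define A where "A = {x \<in> space Q. 1 < f x}"
  define a where "a = measure Q A"
  define b where "b = measure P A"
  have A: "A \<in> sets Q" and L1: "(\<integral>x. \<bar>f x - 1\<bar> \<partial>Q) = 2 * (b - a)"
    using scheffe unfolding Pd by (simp_all add: A_def a_def b_def)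
  have "ennreal v \<le> ennreal (2 * (b - a))"
    using tv TV_P[OF M QM] L1 unfolding Pd by simp
  moreover have "0 \<le> 2 * (b - a)"
    using L1[symmetric] by simp
  ultimately have excess: "v / 2 \<le> b - a"
    by (simp add: ennreal_le_iff)
  have "a \<noteq> 0"
  proof
    assume "a = 0"
    then have "emeasure P A = 0"
      using absolutely_continuousD[OF ac A] by (simp add: a_def emeasure_eq_measure)
    with \<open>a = 0\<close> excess v show False
      by (simp add: b_def measure_def)
  qed
  then have a_pos: "0 < a" by (simp add: a_def zero_less_measure_iff)
  have "b \<le> 1"
    using P unfolding b_def by (simp add: prob_space.prob_le_1)
  with excess v have a_le: "a \<le> 1 - v / 2" by simp
  have "KL2 (a + v / 2) a = ereal (kl_bin (a + v / 2) a)"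
    using a_pos a_le v by (intro KL2_eq_kl_bin) auto
  also have "\<dots> \<le> ereal (kl_bin b a)"
    using a_pos excess \<open>b \<le> 1\<close> v by (simp add: kl_bin_mono)
  also have "\<dots> \<le> KLdiv P Q"
    using kl_bin_le_entropy[OF ent A] a_pos a_le v KL unfolding Pd by (simp add: a_def b_def)
  finally show ?thesis
    using A a_pos a_le sQ unfolding a_def by auto
qed

text \<open>Upper bound: each binary divergence is attained by a measure at total variation exactly
  \<open>v\<close>, namely the one with a two-valued density.\<close>
lemma KLdiv_binary_attained:
  assumes M: "sigma_finite_measure M" and QM: "Q \<in> Pset M" and v: "0 < v"
    and A: "A \<in> sets M" and a_pos: "0 < measure Q A" and a_le: "measure Q A \<le> 1 - v / 2"
  shows "\<exists>P. P \<in> Pset M \<and> ennreal v \<le> TV M P Q \<and>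
             KLdiv P Q = KL2 (measure Q A + v / 2) (measure Q A)"
proof -
  have Q: "prob_space Q" and sQ: "sets Q = sets M"
    using QM by (auto simp: Pset_def)
  have AQ: "A \<in> sets Q" using A sQ by simp
  define a where "a = measure Q A"
  define y where "y = a + v / 2"
  have a: "0 < a" "a < 1" and y: "a < y" "y \<le> 1"
    using a_pos a_le v by (auto simp: a_def y_def)
  define h where "h x = (if x \<in> A then y / a else (1 - y) / (1 - a))" for x
  have h_nonneg: "0 \<le> h x" for x
    using a y by (simp add: h_def)
  have h_int: "integrable Q h" "(\<integral>x. h x \<partial>Q) = 1"
    using two_valued_integral[OF Q AQ, of "y / a" "(1 - y) / (1 - a)"] a
    by (simp_all add: h_def[abs_def] a_def[symmetric])
  have h_borel: "h \<in> borel_measurable Q"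
    unfolding h_def[abs_def] using AQ by measurable
  interpret prob_density Q h
    by (intro prob_density.intro prob_density_axioms.intro Q h_borel h_nonneg h_int)
  have abs_h: "(\<lambda>x. \<bar>h x - 1\<bar>) = (\<lambda>x. if x \<in> A then y / a - 1 else 1 - (1 - y) / (1 - a))"
    using a y by (auto simp: h_def fun_eq_iff)
  have "(\<integral>x. \<bar>h x - 1\<bar> \<partial>Q) = (y / a - 1) * a + (1 - (1 - y) / (1 - a)) * (1 - a)"
    unfolding abs_h a_def by (rule two_valued_integral(2)[OF Q AQ])
  also have "\<dots> = 2 * (y - a)"
    using a by (simp add: field_simps)
  finally have "(\<integral>x. \<bar>h x - 1\<bar> \<partial>Q) = 2 * (y - a)" .
  then have TV: "TV M (density Q h) Q = ennreal v"
    using TV_P[OF M QM] by (simp add: y_def)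
  have ent_h: "(\<lambda>x. h x * ln (h x))
      = (\<lambda>x. if x \<in> A then y / a * ln (y / a) else (1 - y) / (1 - a) * ln ((1 - y) / (1 - a)))"
    by (auto simp: h_def fun_eq_iff)
  have "KLdiv (density Q h) Q = ereal (kl_bin y a)"
    using KLdiv_P two_valued_integral[OF Q AQ] a unfolding ent_h a_def[symmetric]
    by (simp add: kl_bin_def)
  also have "\<dots> = KL2 (measure Q A + v / 2) (measure Q A)"
    using a by (simp add: KL2_eq_kl_bin y_def a_def)
  finally show ?thesis
    using P_in_Pset[OF QM] TV by (intro exI[of _ "density Q h"]) simp
qed

theorem mainTheorem11:
  fixes M Q :: "'a measure" and v :: real
  assumes "sigma_finite_measure M"
    and "Q \<in> Pset M"
    and "0 < v" and "v < 2"
  shows "Dstar M v Q =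
    Inf {KL2 (measure Q A + v / 2) (measure Q A) | A.
           A \<in> sets M \<and> 0 < measure Q A \<and> measure Q A \<le> 1 - v / 2}"
  unfolding Dstar_def
proof (rule antisym)
  show "Inf {KLdiv P Q |P. P \<in> Pset M \<and> ennreal v \<le> TV M P Q}
    \<le> Inf {KL2 (measure Q A + v / 2) (measure Q A) | A.
           A \<in> sets M \<and> 0 < measure Q A \<and> measure Q A \<le> 1 - v / 2}"
    using KLdiv_binary_attained[OF assms(1-3)] by (intro Inf_mono) fastforce
  show "Inf {KL2 (measure Q A + v / 2) (measure Q A) | A.
           A \<in> sets M \<and> 0 < measure Q A \<and> measure Q A \<le> 1 - v / 2}
     \<le> Inf {KLdiv P Q |P. P \<in> Pset M \<and> ennreal v \<le> TV M P Q}"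
  proof (rule Inf_greatest)
    fix s assume "s \<in> {KLdiv P Q |P. P \<in> Pset M \<and> ennreal v \<le> TV M P Q}"
    then obtain P where P: "P \<in> Pset M" "ennreal v \<le> TV M P Q" and s: "s = KLdiv P Q"
      by blast
    show "Inf {KL2 (measure Q A + v / 2) (measure Q A) | A.
           A \<in> sets M \<and> 0 < measure Q A \<and> measure Q A \<le> 1 - v / 2} \<le> s"
    proof (cases "s = \<infinity>")
      case False
      with KLdiv_ge_binary[OF assms(1,2) P(1) assms(3) P(2)] s show ?thesis
        by (auto intro: Inf_lower2)
    qed simp
  qed
qed

end
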